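(* Let $H\in(3/4,1)$, $\alpha=(1,-1)$ and $v_N:=\mathbf E[V_N(2,(1,-1))^2]$. Then $$N^{4-4H}\,v_N\xrightarrow[N\to\infty]{}\frac{4K_0}{k_1^2},$$ where $k_1=-t/4$, $k_2=\frac{4H-1}{8(2H+1)}$ and $$K_0=\int_0^1\big(k_1H(2H-1)x^{2H-2}+k_2H(2H+1)x^{2H-1}\big)^2(1-x)\,dx=k_1^2\frac{H^2(2H-1)}{2(4H-3)}+2k_1k_2\frac{H^2(2H+1)}{2(4H-1)}+k_2^2\frac{H(2H+1)^2}{4(4H-1)}.$$
   Context: Let $W^H=\{W^H_s(A): s\ge 0, A\in\mathcal B_b(\mathbb R)\}$ be a centered Gaussian field with $\mathbf E[W^H_s(A)W^H_r(B)]=R_H(s,r)\lambda(A\cap B)$, where $R_H(s,r)=\frac12(s^{2H}+r^{2H}-|s-r|^{2H})$ and $\lambda$ is Lebesgue measure. Let $u(t,x)=\int_0^t\int_{\mathbb R}G_1(t-s,x-y)\,W^H(ds,dy)$, with $G_1(t,x)=\frac12\mathbf 1_{\{|x|<t\}}$ (mild solution of the 1D wave equation driven by $\dot W^H$ with zero initial data). Fix $t>1$. For $x,y\in[0,1]$, $\mathbf E[u(t,x)u(t,y)]=\frac12\big(c_H|x-y|^{2H+1}-\frac t2|x-y|^{2H}+\frac{t^{2H+1}}{2H+1}\big)$, $c_H=\frac{4H-1}{4(2H+1)}$. For the filter $\alpha=(1,-1)$ (length 2, order 1), $U^\alpha(i/N)=u(t,i/N)-u(t,(i-1)/N)$ for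 $i=1,\dots,N$, and $V_N(2,(1,-1))=\frac{1}{N-1}\sum_{i=1}^N\big[U^\alpha(i/N)^2/\mathbf E[U^\alpha(i/N)^2]-1\big]$. *)

theory Defs
  imports "HOL-Probability.Probability"
begin

definition c_H :: "real \<Rightarrow> real" where
  "c_H H = (4*H - 1) / (4*(2*H + 1))"

definition u_cov :: "real \<Rightarrow> real \<Rightarrow> real \<Rightarrow> real \<Rightarrow> real" where
  "u_cov H t x y = (1/2) * (c_H H * \<bar>x - y\<bar> powr (2*H + 1) - (t/2) * \<bar>x - y\<bar> powr (2*H)
                          + t powr (2*H + 1) / (2*H + 1))"

text \<open>A centered jointly Gaussian process (X x), x in S, on the probability space M with
  covariance C: every finite linear combination has the Gaussian characteristic function.\<close>
definition centered_gaussian_process ::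
  "'a measure \<Rightarrow> (real \<Rightarrow> 'a \<Rightarrow> real) \<Rightarrow> real set \<Rightarrow> (real \<Rightarrow> real \<Rightarrow> real) \<Rightarrow> bool" where
  "centered_gaussian_process M X S C \<longleftrightarrow>
     (\<forall>x\<in>S. X x \<in> borel_measurable M) \<and>
     (\<forall>(n::nat) (p::nat \<Rightarrow> real) (c::nat \<Rightarrow> real). (\<forall>k<n. p k \<in> S) \<longrightarrow>
        (LINT \<omega>|M. cis (\<Sum>k<n. c k * X (p k) \<omega>)) =
          complex_of_real (exp (-(1/2) * (\<Sum>k<n. \<Sum>l<n. c k * c l * C (p k) (p l)))))"

definition U_alpha :: "(real \<Rightarrow> 'a \<Rightarrow> real) \<Rightarrow> nat \<Rightarrow> nat \<Rightarrow> 'a \<Rightarrow> real" where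
  "U_alpha X N i \<omega> = X (real i / real N) \<omega> - X ((real i - 1) / real N) \<omega>"

definition V_N :: "'a measure \<Rightarrow> (real \<Rightarrow> 'a \<Rightarrow> real) \<Rightarrow> nat \<Rightarrow> 'a \<Rightarrow> real" where
  "V_N M X N \<omega> = (1 / (real N - 1)) *
     (\<Sum>i\<in>{1..N}. (U_alpha X N i \<omega>)\<^sup>2 / (LINT \<omega>'|M. (U_alpha X N i \<omega>')\<^sup>2) - 1)"

definition k1 :: "real \<Rightarrow> real" where "k1 t = - t / 4"
definition k2 :: "real \<Rightarrow> real" where "k2 H = (4*H - 1) / (8*(2*H + 1))"

definition K0 :: "real \<Rightarrow> real \<Rightarrow> real" where
  "K0 H t = (k1 t)\<^sup>2 * (H\<^sup>2 * (2*H - 1)) / (2*(4*H - 3))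
          + 2 * k1 t * k2 H * (H\<^sup>2 * (2*H + 1)) / (2*(4*H - 1))
          + (k2 H)\<^sup>2 * (H * (2*H + 1)\<^sup>2) / (4*(4*H - 1))"

end

theory Submission
  imports Defs
begin

text \<open>The increments of u are jointly Gaussian, so Isserlis' formula gives
  \<open>E V_N^2 = (N-1)^-2 * \<Sum>i j. 2 \<rho>(|i-j|)^2\<close>, where \<open>\<rho>(m)\<close> is the correlation of increments at lag \<open>m\<close>.
  As the covariance of u depends on \<open>|x - y|\<close> only, \<open>\<rho>(m)\<close> is a combination of the second differences
  \<open>(m+1)^p + (m-1)^p - 2m^p \<sim> p(p-1) m^(p-2)\<close> for \<open>p = 2H\<close> and \<open>p = 2H+1\<close>. For \<open>H > 3/4\<close> the
  squared correlations are not summable and \<open>\<Sum>m=1..N. (N-m) \<rho>(m)^2\<close> is a Riemann sum: if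
  \<open>g(m) \<sim> L m^s\<close> with \<open>s > -1\<close>, then \<open>\<Sum>m=1..N. (N-m) g(m) \<sim> L N^(s+2) / ((s+1)(s+2))\<close>, and the
  resulting constant is the integral \<open>K0\<close>.\<close>

section \<open>Weighted sums of regularly varying sequences\<close>

lemma powr_succ_diff_quotient_MVT:
  fixes x s :: real
  assumes "x > 0" and "s \<noteq> -1"
  obtains z where "x < z" "z < x + 1" "((x + 1) powr (s + 1) - x powr (s + 1)) / (s + 1) = z powr s"
proof -
  have "DERIV (\<lambda>y. y powr (s + 1)) y :> (s + 1) * y powr s" if "x \<le> y" for y
    using has_real_derivative_powr[of y "s + 1"] that assms by simp
  from MVT2[of x "x + 1", OF _ this] obtain z
    where "x < z" "z < x + 1" "(x + 1) powr (s + 1) - x powr (s + 1) = (s + 1) * z powr s"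
    by auto
  with that show ?thesis using assms(2) by simp
qed

lemma sum_powr_telescope_bounds:
  fixes s :: real
  assumes s: "s > -1" and n: "n \<ge> 1"
  defines "S \<equiv> \<Sum>k=1..n. real k powr s" and "T \<equiv> (real n powr (s+1) - 1) / (s+1)"
  shows "(S - real n powr s \<le> T \<and> T \<le> S - 1) \<or> (S - 1 \<le> T \<and> T \<le> S - real n powr s)"
proof -
  define d where "d k = ((real k + 1) powr (s+1) - real k powr (s+1)) / (s+1)" for k :: nat
  have telescope: "(\<Sum>k=1..<n. d k) = T"
    using n unfolding T_def
    by (induction n rule: dec_induct) (simp_all add: d_def add_divide_distrib diff_divide_distrib add.commute)
  have lower_sum: "(\<Sum>k=1..<n. real k powr s) = S - real n powr s"
    using n unfolding S_def by (simp add: atLeastLessThanSuc_atLeastAtMost[symmetric] sum.atLeastLessThan_Suc)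
  have "(\<Sum>k=1..<n. (real k + 1) powr s) = (\<Sum>k=Suc 1..<Suc n. real k powr s)"
    unfolding sum.shift_bounds_Suc_ivl by (intro sum.cong) (auto simp: add.commute)
  also have "\<dots> = S - 1"
    using n unfolding S_def by (simp add: atLeastLessThanSuc_atLeastAtMost sum.atLeast_Suc_atMost)
  finally have upper_sum: "(\<Sum>k=1..<n. (real k + 1) powr s) = S - 1" .
  have "\<exists>z. real k < z \<and> z < real k + 1 \<and> d k = z powr s" if "k \<ge> 1" for k
    unfolding d_def by (rule powr_succ_diff_quotient_MVT[of "real k" s]) (use that s in auto)
  then obtain z where z: "\<And>k. k \<ge> 1 \<Longrightarrow> real k < z k \<and> z k < real k + 1 \<and> d k = z k powr s"
    by metis
  show ?thesis
  proof (cases "s \<ge> 0")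
    case True
    then have "real k powr s \<le> d k \<and> d k \<le> (real k + 1) powr s" if "k \<ge> 1" for k
      using z[OF that] that by (auto intro!: powr_mono2)
    then have "(\<Sum>k=1..<n. real k powr s) \<le> T \<and> T \<le> (\<Sum>k=1..<n. (real k + 1) powr s)"
      unfolding telescope[symmetric] by (auto intro!: sum_mono)
    then show ?thesis unfolding lower_sum upper_sum by blast
  next
    case False
    then have "(real k + 1) powr s \<le> d k \<and> d k \<le> real k powr s" if "k \<ge> 1" for k
      using z[OF that] that by (auto intro!: powr_mono2')
    then have "(\<Sum>k=1..<n. (real k + 1) powr s) \<le> T \<and> T \<le> (\<Sum>k=1..<n. real k powr s)"
      unfolding telescope[symmetric] by (auto intro!: sum_mono)
    then show ?thesis unfolding lower_sum upper_sum by blast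
  qed
qed

lemma sum_powr_error_bound:
  fixes s :: real
  assumes s: "s > -1" and n: "n \<ge> 1"
  shows "\<bar>(\<Sum>k=1..n. real k powr s) - real n powr (s+1) / (s+1)\<bar> \<le> real n powr s + 1 + 1/(s+1)"
proof -
  have "real n powr (s+1) / (s+1) = (real n powr (s+1) - 1) / (s+1) + 1/(s+1)"
    using s by (simp add: diff_divide_distrib)
  moreover have "real n powr s \<ge> 0" "1/(s+1) > 0" using s by simp_all
  ultimately show ?thesis unfolding abs_le_iff using sum_powr_telescope_bounds[OF s n] by linarith
qed

lemma tendsto_real_powr_neg: "a > 0 \<Longrightarrow> (\<lambda>n::nat. C * real n powr (-a)) \<longlonglongrightarrow> 0"
  using tendsto_mult_right_zero[OF tendsto_neg_powr[OF _ filterlim_real_sequentially]] by simp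

lemma sum_powr_asymp:
  fixes s :: real assumes s: "s > -1"
  shows "(\<lambda>n. (\<Sum>k=1..n. real k powr s) / real n powr (s+1)) \<longlonglongrightarrow> 1/(s+1)"
proof -
  let ?err = "\<lambda>n::nat. (\<Sum>k=1..n. real k powr s) / real n powr (s+1) - 1/(s+1)"
  have "?err \<longlonglongrightarrow> 0"
  proof (rule Lim_null_comparison)
    let ?g = "\<lambda>n::nat. 1 / real n + (1 + 1/(s+1)) * real n powr (-(s+1))"
    show "?g \<longlonglongrightarrow> 0"
      using tendsto_add[OF lim_inverse_n' tendsto_real_powr_neg[of "s+1" "1 + 1/(s+1)"]] s by simp
    show "\<forall>\<^sub>F n in sequentially. norm (?err n) \<le> ?g n"
      using eventually_ge_at_top[of 1]
    proof eventually_elim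
      case (elim n)
      have np: "real n powr (s+1) > 0" using elim by simp
      have "?err n = ((\<Sum>k=1..n. real k powr s) - real n powr (s+1)/(s+1)) / real n powr (s+1)"
        using np by (simp add: diff_divide_distrib)
      then have "norm (?err n) = \<bar>(\<Sum>k=1..n. real k powr s) - real n powr (s+1)/(s+1)\<bar> / real n powr (s+1)"
        using np by (simp add: abs_divide)
      also have "\<dots> \<le> (real n powr s + 1 + 1/(s+1)) / real n powr (s+1)"
        using sum_powr_error_bound[OF s elim] np by (intro divide_right_mono) auto
      also have "\<dots> = ?g n"
      proof -
        have "real n powr (-(s+1)) = 1 / real n powr (s+1)" by (subst powr_minus) (simp add: divide_inverse)
        moreover have "real n powr (s+1) = real n powr s * real n" using elim by (simp add: powr_add)
        ultimately show ?thesis using elim by (simp add: field_simps)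
      qed
      finally show ?case .
    qed
  qed
  then show ?thesis by (simp add: LIM_zero_iff)
qed

lemma weighted_sum_powr_asymp:
  fixes s :: real assumes s: "s > -1"
  shows "(\<lambda>n. (\<Sum>k=1..n. (real n - real k) * real k powr s) / real n powr (s+2)) \<longlonglongrightarrow> 1/((s+1)*(s+2))"
proof -
  have "(\<lambda>n. (\<Sum>k=1..n. real k powr (s+1)) / real n powr (s+2)) \<longlonglongrightarrow> 1/(s+2)"
    using sum_powr_asymp[of "s+1"] s by (simp add: add.assoc)
  then have lim: "(\<lambda>n. (\<Sum>k=1..n. real k powr s) / real n powr (s+1) - (\<Sum>k=1..n. real k powr (s+1)) / real n powr (s+2))
      \<longlonglongrightarrow> 1/(s+1) - 1/(s+2)"
    using s by (intro tendsto_diff sum_powr_asymp) auto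
  have const: "1/(s+1) - 1/(s+2) = 1/((s+1)*(s+2))" using s by (simp add: field_simps)
  have eq: "(\<Sum>k=1..n. real k powr s) / real n powr (s+1) - (\<Sum>k=1..n. real k powr (s+1)) / real n powr (s+2)
      = (\<Sum>k=1..n. (real n - real k) * real k powr s) / real n powr (s+2)" if "n \<ge> 1" for n
  proof -
    have n: "real n > 0" using that by simp
    have "(\<Sum>k=1..n. (real n - real k) * real k powr s) = real n * (\<Sum>k=1..n. real k powr s) - (\<Sum>k=1..n. real k powr (s+1))"
      by (simp add: sum_distrib_left sum_subtractf[symmetric] powr_add algebra_simps)
    moreover have "real n powr (s+2) = real n * real n powr (s+1)"
      using powr_mult_base[of "real n" "s+1"] by (simp add: add.commute add.left_commute)
    ultimately show ?thesis using n by (simp add: field_simps)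
  qed
  show ?thesis
    by (rule Lim_transform_eventually[OF lim[unfolded const]]) (use eq in \<open>auto intro: eventually_sequentiallyI\<close>)
qed

lemma weighted_sum_abs_bound:
  fixes e :: "nat \<Rightarrow> real"
  assumes tail: "\<And>k. k > K \<Longrightarrow> \<bar>e k\<bar> \<le> \<epsilon> * real k powr s" and "\<epsilon> \<ge> 0"
  shows "\<bar>\<Sum>k=1..n. (real n - real k) * e k\<bar>
    \<le> real n * (\<Sum>k\<le>K. \<bar>e k\<bar>) + \<epsilon> * (\<Sum>k=1..n. (real n - real k) * real k powr s)"
proof -
  have term_bound: "\<bar>(real n - real k) * e k\<bar>
      \<le> real n * (if k \<le> K then \<bar>e k\<bar> else 0) + \<epsilon> * ((real n - real k) * real k powr s)"
    if k: "k \<in> {1..n}" for k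
  proof (cases "k \<le> K")
    case True
    have "\<bar>(real n - real k) * e k\<bar> \<le> real n * \<bar>e k\<bar>"
      using k by (auto simp: abs_mult intro!: mult_right_mono)
    moreover have "\<epsilon> * ((real n - real k) * real k powr s) \<ge> 0" using k assms(2) by auto
    ultimately show ?thesis using True by simp
  next
    case False
    then have "\<bar>(real n - real k) * e k\<bar> \<le> (real n - real k) * (\<epsilon> * real k powr s)"
      using k tail[of k] by (auto simp: abs_mult intro!: mult_left_mono)
    then show ?thesis using False by (simp add: ac_simps)
  qed
  have "(\<Sum>k=1..n. if k \<le> K then \<bar>e k\<bar> else 0) = (\<Sum>k\<in>{1..n} \<inter> {..K}. \<bar>e k\<bar>)"
    by (simp add: sum.inter_restrict atMost_def)
  also have "\<dots> \<le> (\<Sum>k\<le>K. \<bar>e k\<bar>)"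
    by (intro sum_mono2) auto
  finally have head: "(\<Sum>k=1..n. if k \<le> K then \<bar>e k\<bar> else 0) \<le> (\<Sum>k\<le>K. \<bar>e k\<bar>)" .
  have "\<bar>\<Sum>k=1..n. (real n - real k) * e k\<bar> \<le> (\<Sum>k=1..n. \<bar>(real n - real k) * e k\<bar>)"
    by (rule sum_abs)
  also have "\<dots> \<le> (\<Sum>k=1..n. real n * (if k \<le> K then \<bar>e k\<bar> else 0) + \<epsilon> * ((real n - real k) * real k powr s))"
    by (intro sum_mono term_bound)
  also have "\<dots> = real n * (\<Sum>k=1..n. if k \<le> K then \<bar>e k\<bar> else 0) + \<epsilon> * (\<Sum>k=1..n. (real n - real k) * real k powr s)"
    by (simp add: sum.distrib sum_distrib_left)
  also have "\<dots> \<le> real n * (\<Sum>k\<le>K. \<bar>e k\<bar>) + \<epsilon> * (\<Sum>k=1..n. (real n - real k) * real k powr s)"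
    using head by (intro add_right_mono mult_left_mono) auto
  finally show ?thesis .
qed

lemma weighted_sum_little_o:
  fixes s :: real and e :: "nat \<Rightarrow> real"
  assumes s: "s > -1" and e: "(\<lambda>k. e k / real k powr s) \<longlonglongrightarrow> 0"
  shows "(\<lambda>n. (\<Sum>k=1..n. (real n - real k) * e k) / real n powr (s+2)) \<longlonglongrightarrow> 0"
proof (rule tendstoI)
  fix \<epsilon> :: real assume "\<epsilon> > 0"
  define T where "T n = (\<Sum>k=1..n. (real n - real k) * real k powr s) / real n powr (s+2)" for n
  define c where "c = 1/((s+1)*(s+2))"
  have c: "c > 0" using s unfolding c_def by simp
  define \<delta> where "\<delta> = \<epsilon> / (c + 2)"
  have \<delta>: "\<delta> > 0" using \<open>\<epsilon> > 0\<close> c unfolding \<delta>_def by simp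
  obtain K where K: "\<And>k. k \<ge> K \<Longrightarrow> \<bar>e k / real k powr s\<bar> < \<delta>"
    using tendstoD[OF e \<delta>] by (auto simp: eventually_sequentially)
  have tail: "\<bar>e k\<bar> \<le> \<delta> * real k powr s" if "k > K" for k
    using K[of k] that by (simp add: abs_divide pos_divide_less_eq less_imp_le)
  define A where "A = (\<Sum>k\<le>K. \<bar>e k\<bar>)"
  have "\<forall>\<^sub>F n in sequentially. T n < c + 1"
    using tendstoD[OF weighted_sum_powr_asymp[OF s] zero_less_one] by eventually_elim (auto simp: T_def c_def dist_real_def)
  moreover have "\<forall>\<^sub>F n in sequentially. A * real n powr (-(s+1)) < \<delta>"
    using tendstoD[OF tendsto_real_powr_neg[of "s+1" A] \<delta>] s by (auto simp: dist_real_def elim: eventually_mono)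
  ultimately show "\<forall>\<^sub>F n in sequentially. dist ((\<Sum>k=1..n. (real n - real k) * e k) / real n powr (s+2)) 0 < \<epsilon>"
    using eventually_gt_at_top[of 0]
  proof eventually_elim
    case (elim n)
    have n: "real n > 0" using elim by simp
    have "real n powr (s+2) = real n * real n powr (s+1)"
      using powr_mult_base[of "real n" "s+1"] by (simp add: add.commute add.left_commute)
    moreover have "real n powr (-(s+1)) = 1 / real n powr (s+1)"
      by (subst powr_minus) (simp add: divide_inverse)
    ultimately have split: "(real n * A + \<delta> * (\<Sum>k=1..n. (real n - real k) * real k powr s)) / real n powr (s+2)
        = A * real n powr (-(s+1)) + \<delta> * T n"
      using n by (simp add: T_def field_simps)
    have "\<bar>(\<Sum>k=1..n. (real n - real k) * e k) / real n powr (s+2)\<bar>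
        \<le> (real n * A + \<delta> * (\<Sum>k=1..n. (real n - real k) * real k powr s)) / real n powr (s+2)"
      unfolding A_def using weighted_sum_abs_bound[where K=K and n=n, OF tail less_imp_le[OF \<delta>]] n
      by (simp add: abs_divide divide_right_mono)
    also have "\<dots> < \<delta> + \<delta> * (c + 1)"
      unfolding split using elim \<delta> by (intro add_strict_left_mono add_less_le_mono) auto
    also have "\<dots> = \<delta> * (c + 2)" by (simp add: algebra_simps)
    also have "\<dots> = \<epsilon>" using c unfolding \<delta>_def by simp
    finally show ?case by (simp add: dist_real_def)
  qed
qed

lemma weighted_sum_asymp:
  fixes s L :: real and g :: "nat \<Rightarrow> real"
  assumes s: "s > -1" and g: "(\<lambda>k. g k / real k powr s) \<longlonglongrightarrow> L"
  shows "(\<lambda>n. (\<Sum>k=1..n. (real n - real k) * g k) / real n powr (s+2)) \<longlonglongrightarrow> L/((s+1)*(s+2))"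
proof -
  define e where "e k = g k - L * real k powr s" for k
  have "(\<lambda>k. g k / real k powr s - L) \<longlonglongrightarrow> 0"
    using tendsto_diff[OF g tendsto_const[of L]] by simp
  then have "(\<lambda>k. e k / real k powr s) \<longlonglongrightarrow> 0"
    by (rule Lim_transform_eventually)
       (use eventually_gt_at_top[of 0] in \<open>eventually_elim, simp add: e_def diff_divide_distrib\<close>)
  from tendsto_add[OF tendsto_mult_left[OF weighted_sum_powr_asymp[OF s], of L] weighted_sum_little_o[OF s this]]
  have "(\<lambda>n. L * ((\<Sum>k=1..n. (real n - real k) * real k powr s) / real n powr (s+2))
         + (\<Sum>k=1..n. (real n - real k) * e k) / real n powr (s+2)) \<longlonglongrightarrow> L/((s+1)*(s+2))"
    by simp
  moreover have "(\<Sum>k=1..n. (real n - real k) * g k)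
      = L * (\<Sum>k=1..n. (real n - real k) * real k powr s) + (\<Sum>k=1..n. (real n - real k) * e k)" for n
    by (simp add: e_def sum_distrib_left sum.distrib[symmetric] algebra_simps)
  ultimately show ?thesis by (simp add: add_divide_distrib)
qed

section \<open>Second differences of powers\<close>

definition second_diff_powr :: "real \<Rightarrow> nat \<Rightarrow> real" where
  "second_diff_powr p k = (real k + 1) powr p + (real k - 1) powr p - 2 * real k powr p"

lemma second_diff_powr_Taylor:
  fixes p :: real and k :: nat
  assumes k: "k \<ge> 2"
  obtains a b where "real k < a" "a < real k + 1" "real k - 1 < b" "b < real k"
    "second_diff_powr p k = p * (p-1) * (a powr (p-2) + b powr (p-2)) / 2"
proof -
  define f where "f m x = (if m = 0 then x powr p else if m = 1 then p * x powr (p-1) else p*(p-1)*x powr (p-2))"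
    for m :: nat and x :: real
  have D: "DERIV (f m) x :> f (Suc m) x" if "m < 2" "real k - 1 \<le> x" for m x
  proof -
    have x: "x > 0" using that k by auto
    show ?thesis
    proof (cases "m = 0")
      case True
      then show ?thesis unfolding f_def using has_real_derivative_powr[OF x, of p] by simp
    next
      case False
      with that have "m = 1" by simp
      have "DERIV (\<lambda>x. p * x powr (p-1)) x :> p * ((p-1) * x powr (p-1-1))"
        by (intro DERIV_cmult has_real_derivative_powr x)
      then show ?thesis unfolding f_def using \<open>m = 1\<close> by (simp add: algebra_simps)
    qed
  qed
  have f0: "f 0 = (\<lambda>x. x powr p)" by (auto simp: f_def)
  obtain a where a: "real k < a" "a < real k + 1"
    "(real k + 1) powr p = (\<Sum>m<2. f m (real k) / fact m * (real k + 1 - real k)^m) + f 2 a / fact 2 * (real k + 1 - real k)^2"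
    using Taylor_up[of 2 f "\<lambda>x. x powr p" "real k" "real k + 1" "real k", OF _ f0] D by auto
  obtain b where b: "real k - 1 < b" "b < real k"
    "(real k - 1) powr p = (\<Sum>m<2. f m (real k) / fact m * (real k - 1 - real k)^m) + f 2 b / fact 2 * (real k - 1 - real k)^2"
    using Taylor_down[of 2 f "\<lambda>x. x powr p" "real k - 1" "real k" "real k", OF _ f0] D by auto
  \<comment> \<open>The first-order terms of the two expansions cancel.\<close>
  have "second_diff_powr p k = p * (p-1) * (a powr (p-2) + b powr (p-2)) / 2"
    using a(3) b(3) unfolding second_diff_powr_def by (simp add: f_def numeral_2_eq_2 field_simps)
  with a b that show ?thesis by blast
qed

lemma tendsto_ratio_of_nat_one:
  fixes x :: "nat \<Rightarrow> real"
  assumes "\<forall>\<^sub>F k in sequentially. \<bar>x k - real k\<bar> \<le> 1"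
  shows "(\<lambda>k. x k / real k) \<longlonglongrightarrow> 1"
proof -
  have "(\<lambda>k. x k / real k - 1) \<longlonglongrightarrow> 0"
  proof (rule Lim_null_comparison[OF _ lim_inverse_n'])
    show "\<forall>\<^sub>F k in sequentially. norm (x k / real k - 1) \<le> 1 / real k"
      using assms eventually_gt_at_top[of 0]
    proof eventually_elim
      case (elim k)
      then have "x k / real k - 1 = (x k - real k) / real k" by (simp add: field_simps)
      then show ?case using elim by (simp add: abs_divide divide_right_mono)
    qed
  qed
  then show ?thesis by (simp add: LIM_zero_iff)
qed

lemma second_diff_powr_asymp: "(\<lambda>k. second_diff_powr p k / real k powr (p-2)) \<longlonglongrightarrow> p*(p-1)"
proof -
  have "\<exists>a b. 2 \<le> k \<longrightarrow> real k < a \<and> a < real k + 1 \<and> real k - 1 < b \<and> b < real k \<and>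
      second_diff_powr p k = p * (p-1) * (a powr (p-2) + b powr (p-2)) / 2" for k
  proof (cases "k \<ge> 2")
    case True
    then show ?thesis by (rule second_diff_powr_Taylor[of k p]) blast
  qed simp
  then obtain A B where AB: "\<And>k. 2 \<le> k \<Longrightarrow> real k < A k \<and> A k < real k + 1 \<and> real k - 1 < B k \<and> B k < real k \<and>
      second_diff_powr p k = p * (p-1) * (A k powr (p-2) + B k powr (p-2)) / 2"
    by metis
  have "(\<lambda>k. A k / real k) \<longlonglongrightarrow> 1" "(\<lambda>k. B k / real k) \<longlonglongrightarrow> 1"
    by (intro tendsto_ratio_of_nat_one eventually_sequentiallyI[of 2], frule AB, simp)+
  then have "(\<lambda>k. p * (p-1) * ((A k / real k) powr (p-2) + (B k / real k) powr (p-2)) / 2) \<longlonglongrightarrow>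
      p * (p-1) * (1 powr (p-2) + 1 powr (p-2)) / 2"
    by (intro tendsto_intros) auto
  then have lim: "(\<lambda>k. p * (p-1) * ((A k / real k) powr (p-2) + (B k / real k) powr (p-2)) / 2) \<longlonglongrightarrow> p * (p-1)"
    by simp
  show ?thesis
  proof (rule Lim_transform_eventually[OF lim])
    show "\<forall>\<^sub>F k in sequentially. p * (p-1) * ((A k / real k) powr (p-2) + (B k / real k) powr (p-2)) / 2
        = second_diff_powr p k / real k powr (p-2)"
      using eventually_ge_at_top[of 2]
    proof eventually_elim
      case (elim k)
      have pos: "A k > 0" "B k > 0" "real k powr (p-2) > 0" using AB[OF elim] elim by auto
      have "second_diff_powr p k = p * (p-1) * (A k powr (p-2) + B k powr (p-2)) / 2"
        using AB[OF elim] by blast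
      then have "second_diff_powr p k / real k powr (p-2)
          = p * (p-1) * (A k powr (p-2) / real k powr (p-2) + B k powr (p-2) / real k powr (p-2)) / 2"
        using pos by (simp add: field_simps)
      then show ?case using pos by (simp add: powr_divide)
    qed
  qed
qed

definition weighted_second_diff_sum :: "real \<Rightarrow> real \<Rightarrow> nat \<Rightarrow> real" where
  "weighted_second_diff_sum p q n = (\<Sum>k=1..n. (real n - real k) * (second_diff_powr p k * second_diff_powr q k))"

lemma weighted_second_diff_sum_asymp:
  fixes p q :: real
  assumes "p + q > 3"
  shows "(\<lambda>n. weighted_second_diff_sum p q n / real n powr (p+q-2)) \<longlonglongrightarrow> p*(p-1)*(q*(q-1)) / ((p+q-3)*(p+q-2))"
proof -
  have "(\<lambda>k. (second_diff_powr p k / real k powr (p-2)) * (second_diff_powr q k / real k powr (q-2)))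
      \<longlonglongrightarrow> p*(p-1)*(q*(q-1))"
    by (intro tendsto_mult second_diff_powr_asymp)
  then have "(\<lambda>k. second_diff_powr p k * second_diff_powr q k / real k powr (p+q-4)) \<longlonglongrightarrow> p*(p-1)*(q*(q-1))"
    by (rule Lim_transform_eventually)
       (use eventually_gt_at_top[of 0] in \<open>eventually_elim, simp add: powr_diff powr_add\<close>)
  from weighted_sum_asymp[OF _ this] assms show ?thesis
    unfolding weighted_second_diff_sum_def by (simp add: algebra_simps)
qed

section \<open>Moments of Gaussian linear combinations\<close>

lemma centered_gaussian_process_lincomb_measurable:
  fixes n :: nat
  assumes "centered_gaussian_process M X S C" and "\<forall>k<n. p k \<in> S"
  shows "(\<lambda>\<omega>. \<Sum>k<n. c k * X (p k) \<omega>) \<in> borel_measurable M"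
  using assms unfolding centered_gaussian_process_def
  by (intro borel_measurable_sum borel_measurable_times borel_measurable_const) auto

lemma centered_gaussian_process_char:
  fixes n :: nat
  assumes "centered_gaussian_process M X S C" and pts: "\<forall>k<n. p k \<in> S"
  shows "char (distr M borel (\<lambda>\<omega>. \<Sum>k<n. c k * X (p k) \<omega>)) \<theta> =
     complex_of_real (exp (-(1/2) * \<theta>^2 * (\<Sum>k<n. \<Sum>l<n. c k * c l * C (p k) (p l))))"
proof -
  have "char (distr M borel (\<lambda>\<omega>. \<Sum>k<n. c k * X (p k) \<omega>)) \<theta> = (CLINT \<omega>|M. cis (\<Sum>k<n. (\<theta> * c k) * X (p k) \<omega>))"
    unfolding char_def using centered_gaussian_process_lincomb_measurable[OF assms]
    by (subst integral_distr) (auto simp: cis_conv_exp sum_distrib_left mult.assoc)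
  also have "\<dots> = complex_of_real (exp (-(1/2) * (\<Sum>k<n. \<Sum>l<n. (\<theta> * c k) * (\<theta> * c l) * C (p k) (p l))))"
    using conjunct2[OF assms(1)[unfolded centered_gaussian_process_def], rule_format, of n p "\<lambda>k. \<theta> * c k"] pts
    by simp
  also have "(\<Sum>k<n. \<Sum>l<n. (\<theta> * c k) * (\<theta> * c l) * C (p k) (p l)) = \<theta>^2 * (\<Sum>k<n. \<Sum>l<n. c k * c l * C (p k) (p l))"
    by (simp add: sum_distrib_left power2_eq_square mult_ac)
  finally show ?thesis by (simp add: mult.assoc)
qed

lemma centered_gaussian_process_quadform_nonneg:
  fixes n :: nat
  assumes "prob_space M" and "centered_gaussian_process M X S C" and "\<forall>k<n. p k \<in> S"
  shows "(\<Sum>k<n. \<Sum>l<n. c k * c l * C (p k) (p l)) \<ge> 0"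
proof -
  interpret prob_space M by fact
  interpret D: real_distribution "distr M borel (\<lambda>\<omega>. \<Sum>k<n. c k * X (p k) \<omega>)"
    using centered_gaussian_process_lincomb_measurable[OF assms(2,3)] by simp
  \<comment> \<open>A characteristic function is bounded by 1, so the exponent of the Gaussian one is \<open>\<le> 0\<close>.\<close>
  have "norm (char (distr M borel (\<lambda>\<omega>. \<Sum>k<n. c k * X (p k) \<omega>)) 1) \<le> 1"
    by (rule D.cmod_char_le_1)
  then show ?thesis
    using centered_gaussian_process_char[OF assms(2,3), of c 1] by simp
qed

lemma centered_gaussian_process_lincomb_distr:
  fixes n :: nat
  assumes "prob_space M" and G: "centered_gaussian_process M X S C" and pts: "\<forall>k<n. p k \<in> S"
  shows "distr M borel (\<lambda>\<omega>. \<Sum>k<n. c k * X (p k) \<omega>)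
    = distr std_normal_distribution borel (\<lambda>x. sqrt (\<Sum>k<n. \<Sum>l<n. c k * c l * C (p k) (p l)) * x)"
    (is "distr M borel ?Y = distr std_normal_distribution borel (\<lambda>x. sqrt ?Q * x)")
proof (rule Levy_uniqueness)
  interpret prob_space M by fact
  interpret std: real_distribution std_normal_distribution by (rule real_dist_normal_dist)
  have Y: "?Y \<in> borel_measurable M" by (rule centered_gaussian_process_lincomb_measurable[OF G pts])
  have scale: "(\<lambda>x. sqrt ?Q * x) \<in> borel_measurable std_normal_distribution" by simp
  show "real_distribution (distr M borel ?Y)" using Y by simp
  show "real_distribution (distr std_normal_distribution borel (\<lambda>x. sqrt ?Q * x))"
    by (rule std.real_distribution_distr[OF scale])
  show "char (distr M borel ?Y) = char (distr std_normal_distribution borel (\<lambda>x. sqrt ?Q * x))"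
  proof
    fix \<theta> :: real
    have "char (distr std_normal_distribution borel (\<lambda>x. sqrt ?Q * x)) \<theta> = char std_normal_distribution (\<theta> * sqrt ?Q)"
      unfolding char_def by (subst integral_distr[OF scale]) (auto simp: mult.assoc)
    also have "\<dots> = complex_of_real (exp (-(1/2) * \<theta>^2 * ?Q))"
      using centered_gaussian_process_quadform_nonneg[OF assms, of c]
      by (simp add: char_std_normal_distribution power_mult_distrib)
    finally show "char (distr M borel ?Y) \<theta> = char (distr std_normal_distribution borel (\<lambda>x. sqrt ?Q * x)) \<theta>"
      using centered_gaussian_process_char[OF G pts] by simp
  qed
qed

lemma centered_gaussian_process_lincomb_moments:
  fixes n :: nat and c :: "nat \<Rightarrow> real"
  assumes "prob_space M" and G: "centered_gaussian_process M X S C" and pts: "\<forall>k<n. p k \<in> S"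
  defines "Y \<equiv> \<lambda>\<omega>. \<Sum>k<n. c k * X (p k) \<omega>" and "Q \<equiv> \<Sum>k<n. \<Sum>l<n. c k * c l * C (p k) (p l)"
  shows "integrable M (\<lambda>\<omega>. (Y \<omega>)^2)" "(LINT \<omega>|M. (Y \<omega>)^2) = Q"
    and "integrable M (\<lambda>\<omega>. (Y \<omega>)^4)" "(LINT \<omega>|M. (Y \<omega>)^4) = 3*Q^2"
proof -
  interpret prob_space M by fact
  have Y[measurable]: "Y \<in> borel_measurable M"
    unfolding Y_def by (rule centered_gaussian_process_lincomb_measurable[OF G pts])
  have scale: "(\<lambda>x. sqrt Q * x) \<in> borel_measurable std_normal_distribution" by simp
  have distr: "distr M borel Y = distr std_normal_distribution borel (\<lambda>x. sqrt Q * x)"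
    unfolding Y_def Q_def by (rule centered_gaussian_process_lincomb_distr[OF assms(1-3)])
  have Q: "Q \<ge> 0"
    unfolding Q_def by (rule centered_gaussian_process_quadform_nonneg[OF assms(1-3)])
  have moment: "integrable M (\<lambda>\<omega>. (Y \<omega>)^(2*k)) \<and>
      (LINT \<omega>|M. (Y \<omega>)^(2*k)) = sqrt Q^(2*k) * (fact (2 * k) / (2^k * fact k))" for k :: nat
  proof
    have "integrable M (\<lambda>\<omega>. (Y \<omega>)^(2*k)) \<longleftrightarrow> integrable (distr M borel Y) (\<lambda>x. x^(2*k))"
      by (subst integrable_distr_eq) auto
    also have "\<dots> \<longleftrightarrow> integrable std_normal_distribution (\<lambda>x. (sqrt Q * x)^(2*k))"
      unfolding distr by (subst integrable_distr_eq[OF scale]) auto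
    finally show "integrable M (\<lambda>\<omega>. (Y \<omega>)^(2*k))"
      unfolding power_mult_distrib by (simp add: std_normal_distribution_even_moments(2))
    have "(LINT \<omega>|M. (Y \<omega>)^(2*k)) = (LINT x|distr M borel Y. x^(2*k))"
      by (subst integral_distr) auto
    also have "\<dots> = (LINT x|std_normal_distribution. (sqrt Q * x)^(2*k))"
      unfolding distr by (subst integral_distr[OF scale]) auto
    also have "\<dots> = sqrt Q^(2*k) * (fact (2 * k) / (2^k * fact k))"
      unfolding power_mult_distrib by (simp add: std_normal_distribution_even_moments(1))
    finally show "(LINT \<omega>|M. (Y \<omega>)^(2*k)) = sqrt Q^(2*k) * (fact (2 * k) / (2^k * fact k))" .
  qed
  have "sqrt Q^2 = Q" using Q by simp
  moreover have "sqrt Q^4 = (sqrt Q^2)^2" by (simp flip: power_mult)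
  ultimately have "sqrt Q^2 = Q" "sqrt Q^4 = Q^2" by simp_all
  then show "integrable M (\<lambda>\<omega>. (Y \<omega>)^2)" "(LINT \<omega>|M. (Y \<omega>)^2) = Q"
    and "integrable M (\<lambda>\<omega>. (Y \<omega>)^4)" "(LINT \<omega>|M. (Y \<omega>)^4) = 3*Q^2"
    using moment[of 1] moment[of 2] by (simp_all add: fact_numeral)
qed

section \<open>The second moment of the normalised quadratic variation\<close>

definition increment_cov :: "(real \<Rightarrow> real \<Rightarrow> real) \<Rightarrow> nat \<Rightarrow> nat \<Rightarrow> nat \<Rightarrow> real" where
  "increment_cov C N i j = C (real i / real N) (real j / real N) - C (real i / real N) ((real j - 1) / real N)
     - C ((real i - 1) / real N) (real j / real N) + C ((real i - 1) / real N) ((real j - 1) / real N)"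

lemma increment_lincomb_moments:
  fixes a b :: real
  assumes "prob_space M" and "centered_gaussian_process M X {0..1} C"
    and sym: "\<And>x y. C x y = C y x" and ij: "i \<in> {1..N}" "j \<in> {1..N}"
  defines "Y \<equiv> \<lambda>\<omega>. a * U_alpha X N i \<omega> + b * U_alpha X N j \<omega>"
    and "Q \<equiv> a^2 * increment_cov C N i i + 2*a*b * increment_cov C N i j + b^2 * increment_cov C N j j"
  shows "integrable M (\<lambda>\<omega>. (Y \<omega>)^2)" "(LINT \<omega>|M. (Y \<omega>)^2) = Q"
    and "integrable M (\<lambda>\<omega>. (Y \<omega>)^4)" "(LINT \<omega>|M. (Y \<omega>)^4) = 3*Q^2"
proof -
  define p where "p k = [real i / real N, (real i - 1) / real N, real j / real N, (real j - 1) / real N] ! k" for k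
  define c where "c k = [a, -a, b, -b] ! k" for k
  have "real m / real N \<in> {0..1}" "(real m - 1) / real N \<in> {0..1}" if "m \<in> {1..N}" for m
    using that by (auto simp: field_simps)
  then have pts: "\<forall>k<4. p k \<in> {0..1}"
    using ij by (auto simp: p_def less_Suc_eq numeral_eq_Suc)
  have "Y = (\<lambda>\<omega>. \<Sum>k<4. c k * X (p k) \<omega>)"
    by (simp add: Y_def eval_nat_numeral p_def c_def U_alpha_def algebra_simps)
  moreover have "Q = (\<Sum>k<4. \<Sum>l<4. c k * c l * C (p k) (p l))"
    using sym[of "real i / real N" "real j / real N"] sym[of "real i / real N" "(real j - 1) / real N"]
      sym[of "(real i - 1) / real N" "real j / real N"] sym[of "(real i - 1) / real N" "(real j - 1) / real N"]
      sym[of "real i / real N" "(real i - 1) / real N"] sym[of "real j / real N" "(real j - 1) / real N"]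
    by (simp add: Q_def eval_nat_numeral p_def c_def increment_cov_def power2_eq_square algebra_simps)
  ultimately show "integrable M (\<lambda>\<omega>. (Y \<omega>)^2)" "(LINT \<omega>|M. (Y \<omega>)^2) = Q"
    and "integrable M (\<lambda>\<omega>. (Y \<omega>)^4)" "(LINT \<omega>|M. (Y \<omega>)^4) = 3*Q^2"
    using centered_gaussian_process_lincomb_moments[OF assms(1,2) pts, of c] by simp_all
qed

lemma increment_sq_moment:
  assumes "prob_space M" and "centered_gaussian_process M X {0..1} C"
    and "\<And>x y. C x y = C y x" and "i \<in> {1..N}"
  shows "integrable M (\<lambda>\<omega>. (U_alpha X N i \<omega>)^2)" "(LINT \<omega>|M. (U_alpha X N i \<omega>)^2) = increment_cov C N i i"
  using increment_lincomb_moments(1,2)[OF assms assms(4), of 1 0] by simp_all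

text \<open>Isserlis' formula for a pair of increments, obtained by polarising fourth moments.\<close>
lemma increment_sq_product_moment:
  assumes "prob_space M" and "centered_gaussian_process M X {0..1} C"
    and "\<And>x y. C x y = C y x" and "i \<in> {1..N}" "j \<in> {1..N}"
  defines "U \<equiv> U_alpha X N i" and "V \<equiv> U_alpha X N j"
  shows "integrable M (\<lambda>\<omega>. (U \<omega>)^2 * (V \<omega>)^2)"
    "(LINT \<omega>|M. (U \<omega>)^2 * (V \<omega>)^2) = increment_cov C N i i * increment_cov C N j j + 2 * (increment_cov C N i j)^2"
proof -
  note m = increment_lincomb_moments(3,4)[OF assms(1-5), folded U_def V_def]
  have int: "integrable M (\<lambda>\<omega>. (U \<omega> + V \<omega>)^4)" "integrable M (\<lambda>\<omega>. (U \<omega> - V \<omega>)^4)"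
      "integrable M (\<lambda>\<omega>. (U \<omega>)^4)" "integrable M (\<lambda>\<omega>. (V \<omega>)^4)"
    using m(1)[of 1 1] m(1)[of 1 "-1"] m(1)[of 1 0] m(1)[of 0 1] by simp_all
  have val: "(LINT \<omega>|M. (U \<omega> + V \<omega>)^4) = 3*(increment_cov C N i i + 2*increment_cov C N i j + increment_cov C N j j)^2"
      "(LINT \<omega>|M. (U \<omega> - V \<omega>)^4) = 3*(increment_cov C N i i - 2*increment_cov C N i j + increment_cov C N j j)^2"
      "(LINT \<omega>|M. (U \<omega>)^4) = 3*(increment_cov C N i i)^2" "(LINT \<omega>|M. (V \<omega>)^4) = 3*(increment_cov C N j j)^2"
    using m(2)[of 1 1] m(2)[of 1 "-1"] m(2)[of 1 0] m(2)[of 0 1] by simp_all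
  have polar: "(\<lambda>\<omega>. (U \<omega>)^2 * (V \<omega>)^2)
      = (\<lambda>\<omega>. ((U \<omega> + V \<omega>)^4 + (U \<omega> - V \<omega>)^4 - 2*(U \<omega>)^4 - 2*(V \<omega>)^4) / 12)"
    by (simp add: power2_eq_square power4_eq_xxxx field_simps)
  show "integrable M (\<lambda>\<omega>. (U \<omega>)^2 * (V \<omega>)^2)"
    unfolding polar using int by (intro integrable_divide integrable_diff integrable_add integrable_mult_right) auto
  show "(LINT \<omega>|M. (U \<omega>)^2 * (V \<omega>)^2) = increment_cov C N i i * increment_cov C N j j + 2 * (increment_cov C N i j)^2"
    unfolding polar using int val
    by (simp add: Bochner_Integration.integral_diff Bochner_Integration.integral_add integrable_diff integrable_add
        integrable_mult_right power2_eq_square algebra_simps)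
qed

lemma normalized_increment_sq_cov:
  assumes "prob_space M" and "centered_gaussian_process M X {0..1} C"
    and "\<And>x y. C x y = C y x" and "i \<in> {1..N}" "j \<in> {1..N}"
    and a: "increment_cov C N i i \<noteq> 0" and b: "increment_cov C N j j \<noteq> 0"
  defines "F \<equiv> \<lambda>i \<omega>. (U_alpha X N i \<omega>)^2 / increment_cov C N i i - 1"
  shows "integrable M (\<lambda>\<omega>. F i \<omega> * F j \<omega>)"
    "(LINT \<omega>|M. F i \<omega> * F j \<omega>) = 2 * (increment_cov C N i j)^2 / (increment_cov C N i i * increment_cov C N j j)"
proof -
  interpret prob_space M by fact
  note UV = increment_sq_product_moment[OF assms(1-5)]
  note U = increment_sq_moment[OF assms(1-4)] and V = increment_sq_moment[OF assms(1-3,5)]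
  have expand: "(\<lambda>\<omega>. F i \<omega> * F j \<omega>) = (\<lambda>\<omega>. (U_alpha X N i \<omega>)^2 * (U_alpha X N j \<omega>)^2 / (increment_cov C N i i * increment_cov C N j j)
      - (U_alpha X N i \<omega>)^2 / increment_cov C N i i - (U_alpha X N j \<omega>)^2 / increment_cov C N j j + 1)"
    using a b by (intro ext) (simp add: F_def field_simps)
  show "integrable M (\<lambda>\<omega>. F i \<omega> * F j \<omega>)"
    unfolding expand using UV(1) U(1) V(1) by (intro Bochner_Integration.integrable_add Bochner_Integration.integrable_diff integrable_divide_zero) auto
  show "(LINT \<omega>|M. F i \<omega> * F j \<omega>) = 2 * (increment_cov C N i j)^2 / (increment_cov C N i i * increment_cov C N j j)"
    unfolding expand using UV U V a b
    by (simp add: Bochner_Integration.integral_diff Bochner_Integration.integral_add integrable_diff integrable_add prob_space field_simps)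
qed

lemma second_moment_V_N:
  assumes "prob_space M" and "centered_gaussian_process M X {0..1} C"
    and "\<And>x y. C x y = C y x" and nz: "\<And>i. i \<in> {1..N} \<Longrightarrow> increment_cov C N i i \<noteq> 0"
  shows "(LINT \<omega>|M. (V_N M X N \<omega>)^2) = (1/(real N - 1))^2 *
     (\<Sum>i\<in>{1..N}. \<Sum>j\<in>{1..N}. 2 * (increment_cov C N i j)^2 / (increment_cov C N i i * increment_cov C N j j))"
proof -
  define F where "F i \<omega> = (U_alpha X N i \<omega>)^2 / increment_cov C N i i - 1" for i \<omega>
  note FF = normalized_increment_sq_cov[OF assms(1-3) _ _ nz nz, folded F_def]
  have "V_N M X N \<omega> = (1/(real N - 1)) * (\<Sum>i\<in>{1..N}. F i \<omega>)" for \<omega>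
    unfolding V_N_def F_def using increment_sq_moment(2)[OF assms(1-3)] by simp
  then have "(V_N M X N \<omega>)^2 = (1/(real N - 1))^2 * (\<Sum>i\<in>{1..N}. \<Sum>j\<in>{1..N}. F i \<omega> * F j \<omega>)" for \<omega>
    by (simp add: power_mult_distrib power2_eq_square sum_product)
  moreover have "(LINT \<omega>|M. (\<Sum>i\<in>{1..N}. \<Sum>j\<in>{1..N}. F i \<omega> * F j \<omega>))
      = (\<Sum>i\<in>{1..N}. \<Sum>j\<in>{1..N}. LINT \<omega>|M. F i \<omega> * F j \<omega>)"
    using FF(1) by (subst Bochner_Integration.integral_sum)
      (auto intro!: sum.cong Bochner_Integration.integral_sum Bochner_Integration.integrable_sum)
  ultimately have "(LINT \<omega>|M. (V_N M X N \<omega>)^2) = (1/(real N - 1))^2 * (\<Sum>i\<in>{1..N}. \<Sum>j\<in>{1..N}. LINT \<omega>|M. F i \<omega> * F j \<omega>)"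
    by simp
  also have "\<dots> = (1/(real N - 1))^2 *
     (\<Sum>i\<in>{1..N}. \<Sum>j\<in>{1..N}. 2 * (increment_cov C N i j)^2 / (increment_cov C N i i * increment_cov C N j j))"
    using FF(2) by simp
  finally show ?thesis .
qed

lemma double_sum_abs_diff:
  fixes f :: "nat \<Rightarrow> real"
  shows "(\<Sum>i\<in>{1..N}. \<Sum>j\<in>{1..N}. f (nat \<bar>int i - int j\<bar>)) = real N * f 0 + 2 * (\<Sum>m=1..N. (real N - real m) * f m)"
proof (induction N)
  case 0 then show ?case by simp
next
  case (Suc N)
  have border: "(\<Sum>j\<in>{1..N}. f (nat \<bar>int (Suc N) - int j\<bar>)) = (\<Sum>m\<in>{1..N}. f m)"
    "(\<Sum>i\<in>{1..N}. f (nat \<bar>int i - int (Suc N)\<bar>)) = (\<Sum>m\<in>{1..N}. f m)"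
    by (subst sum.atLeastAtMost_rev[of f 1 N, simplified add.commute], intro sum.cong refl arg_cong[where f=f],
        simp add: atLeastAtMost_iff; arith)+
  have "(\<Sum>i\<in>{1..Suc N}. \<Sum>j\<in>{1..Suc N}. f (nat \<bar>int i - int j\<bar>)) =
      (\<Sum>i\<in>{1..N}. \<Sum>j\<in>{1..N}. f (nat \<bar>int i - int j\<bar>)) + (\<Sum>i\<in>{1..N}. f (nat \<bar>int i - int (Suc N)\<bar>))
      + (\<Sum>j\<in>{1..N}. f (nat \<bar>int (Suc N) - int j\<bar>)) + f 0"
    by (simp add: sum.distrib)
  moreover have "(\<Sum>m=1..Suc N. (real (Suc N) - real m) * f m) = (\<Sum>m=1..N. (real N - real m) * f m) + (\<Sum>m=1..N. f m)"
    by (simp add: sum.distrib[symmetric] algebra_simps)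
  ultimately show ?case unfolding border Suc.IH by (simp add: algebra_simps)
qed

section \<open>Increments of the wave solution\<close>

definition u_profile :: "real \<Rightarrow> real \<Rightarrow> real \<Rightarrow> real" where
  "u_profile H t x = c_H H * x powr (2*H+1) - (t/2) * x powr (2*H)"

lemma increment_cov_u_cov:
  assumes "N > 0"
  shows "increment_cov (u_cov H t) N i j = (1/2) * (2 * u_profile H t (\<bar>real i - real j\<bar> / real N)
      - u_profile H t (\<bar>real i - real j + 1\<bar> / real N) - u_profile H t (\<bar>real i - real j - 1\<bar> / real N))"
proof -
  have "\<bar>x / real N - y / real N\<bar> = \<bar>x - y\<bar> / real N" for x y
    using assms by (simp add: diff_divide_distrib[symmetric] abs_divide)
  then show ?thesis
    unfolding increment_cov_def u_cov_def u_profile_def by (simp add: algebra_simps)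
qed

lemma u_profile_scale:
  assumes "real N > 0" "x \<ge> 0"
  shows "u_profile H t (x / real N) = (c_H H * x powr (2*H+1) / real N - (t/2) * x powr (2*H)) / real N powr (2*H)"
proof -
  have "real N powr (2*H+1) = real N powr (2*H) * real N" using assms by (simp add: powr_add)
  then show ?thesis unfolding u_profile_def using assms by (simp add: powr_divide field_simps)
qed

text \<open>\<open>N powr (2*H)\<close> times the covariance of two increments of u at lag \<open>m\<close>. Lag 0 is a separate
  branch: there \<open>second_diff_powr\<close> would involve \<open>(-1) powr p\<close>, which is junk.\<close>
definition u_increment_cov :: "real \<Rightarrow> real \<Rightarrow> nat \<Rightarrow> nat \<Rightarrow> real" where
  "u_increment_cov H t N m = (if m = 0 then t/2 - c_H H / real N
      else (t/4) * second_diff_powr (2*H) m - (c_H H/2) * second_diff_powr (2*H+1) m / real N)"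

lemma increment_cov_u_cov_lag:
  assumes N: "N > 0"
  shows "increment_cov (u_cov H t) N i j = u_increment_cov H t N (nat \<bar>int i - int j\<bar>) / real N powr (2*H)"
proof -
  have Np: "real N > 0" using N by simp
  define m where "m = nat \<bar>int i - int j\<bar>"
  have "\<bar>real i - real j\<bar> = real m" unfolding m_def by linarith
  moreover have "u_profile H t (\<bar>real i - real j + 1\<bar> / real N) + u_profile H t (\<bar>real i - real j - 1\<bar> / real N)
      = u_profile H t ((real m + 1) / real N) + u_profile H t (\<bar>real m - 1\<bar> / real N)"
  proof -
    have "real i - real j = real m \<or> real i - real j = - real m" unfolding m_def by linarith
    then show ?thesis
    proof
      assume "real i - real j = - real m"
      moreover have "\<bar>- real m + 1\<bar> = \<bar>real m - 1\<bar>" "\<bar>- real m - 1\<bar> = real m + 1" by linarith+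
      ultimately show ?thesis by (simp add: add.commute)
    qed simp
  qed
  ultimately have "increment_cov (u_cov H t) N i j = (1/2) * (2 * u_profile H t (real m / real N)
      - u_profile H t ((real m + 1) / real N) - u_profile H t (\<bar>real m - 1\<bar> / real N))"
    unfolding increment_cov_u_cov[OF N] by simp
  also have "\<dots> = u_increment_cov H t N m / real N powr (2*H)"
    using Np by (cases "m = 0") (simp_all add: u_profile_scale u_increment_cov_def second_diff_powr_def field_simps,
      simp add: u_profile_def)
  finally show ?thesis unfolding m_def .
qed

lemma u_increment_cov_zero_pos:
  assumes "H \<ge> 1/4" "t > 1" "N \<ge> 1"
  shows "u_increment_cov H t N 0 > 0"
proof -
  have "0 \<le> c_H H" "c_H H < 1/2" using assms(1) unfolding c_H_def by (simp_all add: field_simps)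
  moreover have "c_H H * 1 \<le> c_H H * real N" using \<open>0 \<le> c_H H\<close> assms(3) by (intro mult_left_mono) auto
  then have "c_H H / real N \<le> c_H H" using assms(3) by (simp add: divide_le_eq)
  ultimately have "c_H H / real N < t/2" using assms(2) by linarith
  then show ?thesis unfolding u_increment_cov_def by simp
qed

lemma second_moment_V_N_u_cov:
  assumes "prob_space M" and "centered_gaussian_process M X {0..1} (u_cov H t)"
    and H: "H \<ge> 1/4" and t: "t > 1" and N: "N \<ge> 2"
  shows "(LINT \<omega>|M. (V_N M X N \<omega>)\<^sup>2) = (1/(real N - 1))^2 *
    (2 * (real N + 2 * (\<Sum>m=1..N. (real N - real m) * (u_increment_cov H t N m / u_increment_cov H t N 0)^2)))"
proof -
  have N0: "N > 0" using N by simp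
  have g0: "u_increment_cov H t N 0 > 0" using u_increment_cov_zero_pos[OF H t] N by simp
  have "\<And>x y. u_cov H t x y = u_cov H t y x" unfolding u_cov_def by (simp add: abs_minus_commute)
  moreover have "increment_cov (u_cov H t) N i i \<noteq> 0" for i
    using g0 N0 by (simp add: increment_cov_u_cov_lag[OF N0])
  ultimately have "(LINT \<omega>|M. (V_N M X N \<omega>)^2) = (1/(real N - 1))^2 *
      (\<Sum>i\<in>{1..N}. \<Sum>j\<in>{1..N}. 2 * (u_increment_cov H t N (nat \<bar>int i - int j\<bar>) / u_increment_cov H t N 0)^2)"
    using second_moment_V_N[OF assms(1,2)]
    by (simp add: increment_cov_u_cov_lag[OF N0] power2_eq_square field_simps)
  also have "\<dots> = (1/(real N - 1))^2 *
      (2 * (real N + 2 * (\<Sum>m=1..N. (real N - real m) * (u_increment_cov H t N m / u_increment_cov H t N 0)^2)))"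
    unfolding double_sum_abs_diff[of "\<lambda>m. 2 * (u_increment_cov H t N m / u_increment_cov H t N 0)^2"]
    using g0 by (simp add: sum_distrib_left algebra_simps)
  finally show ?thesis .
qed

lemma u_increment_cov_lag_pos:
  assumes "m \<noteq> 0"
  shows "u_increment_cov H t N m = - (k1 t * second_diff_powr (2*H) m + k2 H * second_diff_powr (2*H+1) m / real N)"
  using assms unfolding u_increment_cov_def k1_def k2_def c_H_def by (simp add: field_simps)

lemma weighted_u_increment_cov_sq_expand:
  assumes N: "N \<ge> 1"
  shows "(\<Sum>m=1..N. (real N - real m) * (u_increment_cov H t N m)^2)
    = (k1 t)^2 * weighted_second_diff_sum (2*H) (2*H) N
      + 2 * k1 t * k2 H * weighted_second_diff_sum (2*H) (2*H+1) N / real N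
      + (k2 H)^2 * weighted_second_diff_sum (2*H+1) (2*H+1) N / (real N)^2"
proof -
  let ?D = "second_diff_powr"
  have "(\<Sum>m=1..N. (real N - real m) * (u_increment_cov H t N m)^2)
      = (\<Sum>m=1..N. (k1 t)^2 * ((real N - real m) * (?D (2*H) m * ?D (2*H) m))
        + 2 * k1 t * k2 H / real N * ((real N - real m) * (?D (2*H) m * ?D (2*H+1) m))
        + (k2 H)^2 / (real N)^2 * ((real N - real m) * (?D (2*H+1) m * ?D (2*H+1) m)))"
    using N by (intro sum.cong refl, subst u_increment_cov_lag_pos) (simp_all add: power2_eq_square field_simps)
  then show ?thesis
    unfolding weighted_second_diff_sum_def by (simp add: sum.distrib sum_distrib_left sum_divide_distrib)
qed

lemma K0_eq_limit_constant:
  assumes H: "3/4 < H"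
  shows "(k1 t)^2 * ((2*H*(2*H-1))*(2*H*(2*H-1)) / ((4*H-3)*(4*H-2)))
      + 2 * k1 t * k2 H * ((2*H*(2*H-1))*((2*H+1)*(2*H)) / ((4*H-2)*(4*H-1)))
      + (k2 H)^2 * (((2*H+1)*(2*H))*((2*H+1)*(2*H)) / ((4*H-1)*(4*H))) = 4 * K0 H t"
proof -
  have nz: "4*H-3 \<noteq> 0" "4*H-2 \<noteq> 0" "4*H-1 \<noteq> 0" "H \<noteq> 0" "2*H-1 \<noteq> 0"
    "(4*H-3)*(4*H-2) \<noteq> 0" "(4*H-2)*(4*H-1) \<noteq> 0" "(4*H-1)*(4*H) \<noteq> 0" using H by auto
  have "(2*H*(2*H-1))*(2*H*(2*H-1)) / ((4*H-3)*(4*H-2)) = 4 * (H\<^sup>2 * (2*H-1) / (2*(4*H-3)))"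
    "(2*H*(2*H-1))*((2*H+1)*(2*H)) / ((4*H-2)*(4*H-1)) = 4 * (H\<^sup>2 * (2*H+1) / (2*(4*H-1)))"
    "((2*H+1)*(2*H))*((2*H+1)*(2*H)) / ((4*H-1)*(4*H)) = 4 * (H * (2*H+1)\<^sup>2 / (4*(4*H-1)))"
    using nz by (simp_all add: field_simps power2_eq_square)
  then show ?thesis unfolding K0_def by (simp add: algebra_simps)
qed

lemma weighted_u_increment_cov_sq_asymp:
  assumes H: "3/4 < H"
  shows "(\<lambda>N. (\<Sum>m=1..N. (real N - real m) * (u_increment_cov H t N m)^2) / real N powr (4*H-2)) \<longlonglongrightarrow> 4 * K0 H t"
proof -
  let ?W = "weighted_second_diff_sum"
  have exponents: "2*H+2*H-2 = 4*H-2" "2*H+(2*H+1)-2 = 4*H-1" "(2*H+1)+(2*H+1)-2 = 4*H"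
    "2*H+2*H-3 = 4*H-3" "2*H+(2*H+1)-3 = 4*H-2" "(2*H+1)+(2*H+1)-3 = 4*H-1" "2*H+1-1 = 2*H" by simp_all
  note lim = weighted_second_diff_sum_asymp[of "2*H" "2*H", unfolded exponents]
    weighted_second_diff_sum_asymp[of "2*H" "2*H+1", unfolded exponents]
    weighted_second_diff_sum_asymp[of "2*H+1" "2*H+1", unfolded exponents]
  have "(\<lambda>N. (k1 t)^2 * (?W (2*H) (2*H) N / real N powr (4*H-2))
        + 2 * k1 t * k2 H * (?W (2*H) (2*H+1) N / real N powr (4*H-1))
        + (k2 H)^2 * (?W (2*H+1) (2*H+1) N / real N powr (4*H)))
      \<longlonglongrightarrow> (k1 t)^2 * ((2*H*(2*H-1))*(2*H*(2*H-1)) / ((4*H-3)*(4*H-2)))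
        + 2 * k1 t * k2 H * ((2*H*(2*H-1))*((2*H+1)*(2*H)) / ((4*H-2)*(4*H-1)))
        + (k2 H)^2 * (((2*H+1)*(2*H))*((2*H+1)*(2*H)) / ((4*H-1)*(4*H)))"
    by (intro tendsto_add tendsto_mult_left lim) (use H in auto)
  then have "(\<lambda>N. (k1 t)^2 * (?W (2*H) (2*H) N / real N powr (4*H-2))
        + 2 * k1 t * k2 H * (?W (2*H) (2*H+1) N / real N powr (4*H-1))
        + (k2 H)^2 * (?W (2*H+1) (2*H+1) N / real N powr (4*H))) \<longlonglongrightarrow> 4 * K0 H t"
    unfolding K0_eq_limit_constant[OF H] .
  moreover have "(k1 t)^2 * (?W (2*H) (2*H) N / real N powr (4*H-2))
        + 2 * k1 t * k2 H * (?W (2*H) (2*H+1) N / real N powr (4*H-1))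
        + (k2 H)^2 * (?W (2*H+1) (2*H+1) N / real N powr (4*H))
      = (\<Sum>m=1..N. (real N - real m) * (u_increment_cov H t N m)^2) / real N powr (4*H-2)" if N: "N \<ge> 1" for N
  proof -
    have "real N powr (4*H-1) = real N powr (4*H-2) * real N" "real N powr (4*H) = real N powr (4*H-2) * (real N)^2"
      using powr_mult_base[of "real N" "4*H-2"] powr_mult_base[of "real N" "4*H-1"]
      by (simp_all add: power2_eq_square algebra_simps)
    then show ?thesis
      unfolding weighted_u_increment_cov_sq_expand[OF N] by (simp add: add_divide_distrib mult.commute)
  qed
  ultimately show ?thesis
    by (rule_tac Lim_transform_eventually) (auto intro: eventually_sequentiallyI[of 1])
qed

lemma scaled_second_moment_expr_split:
  assumes "H \<ge> 1/4" "t > 1" "N \<ge> 2"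
  defines "g \<equiv> u_increment_cov H t N"
  shows "real N powr (4-4*H) * ((1/(real N - 1))^2 * (2 * (real N + 2 * (\<Sum>m=1..N. (real N - real m) * (g m / g 0)^2))))
    = 2 * (real N / (real N - 1))^2 * real N powr (-(4*H-3))
      + 4 * (real N / (real N - 1))^2 * ((\<Sum>m=1..N. (real N - real m) * (g m)^2) / real N powr (4*H-2)) / (g 0)^2"
proof -
  define P where "P = real N powr (4*H-2)"
  define S where "S = (\<Sum>m=1..N. (real N - real m) * (g m)^2)"
  have pos: "P > 0" "real N > 1" "g 0 > 0"
    using assms u_increment_cov_zero_pos[of H t N] unfolding P_def by auto
  have "real N powr (4-4*H) = real N powr (2 - (4*H-2))" "real N powr (-(4*H-3)) = real N powr (1 - (4*H-2))"
    by (rule arg_cong[where f="\<lambda>x. real N powr x"], simp)+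
  then have pw: "real N powr (4-4*H) = (real N)^2 / P" "real N powr (-(4*H-3)) = real N / P"
    using assms(3) unfolding P_def powr_diff by simp_all
  have "(\<Sum>m=1..N. (real N - real m) * (g m / g 0)^2) = S / (g 0)^2"
    unfolding S_def by (simp add: power_divide sum_divide_distrib)
  then show ?thesis
    unfolding pw P_def[symmetric] S_def[symmetric] using pos by (simp add: field_simps)
qed

lemma scaled_second_moment_expr_limit:
  assumes H: "3/4 < H" and t: "t > 1"
  shows "(\<lambda>N. real N powr (4-4*H) * ((1/(real N - 1))^2 *
      (2 * (real N + 2 * (\<Sum>m=1..N. (real N - real m) * (u_increment_cov H t N m / u_increment_cov H t N 0)^2)))))
    \<longlonglongrightarrow> 4 * K0 H t / (k1 t)^2"
proof -
  have g0: "(\<lambda>N. u_increment_cov H t N 0) \<longlonglongrightarrow> t/2"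
    using tendsto_diff[OF tendsto_const[of "t/2"] tendsto_mult_right_zero[OF lim_inverse_n', of "c_H H"]]
    by (simp add: u_increment_cov_def)
  have ratio: "(\<lambda>N. real N / (real N - 1)) \<longlonglongrightarrow> 1" by real_asymp
  have decay: "(\<lambda>N. real N powr (-(4*H-3))) \<longlonglongrightarrow> 0"
    using H tendsto_real_powr_neg[of "4*H-3" 1] by simp
  have "(\<lambda>N. 2 * (real N / (real N - 1))^2 * real N powr (-(4*H-3))
      + 4 * (real N / (real N - 1))^2 * ((\<Sum>m=1..N. (real N - real m) * (u_increment_cov H t N m)^2) / real N powr (4*H-2))
        / (u_increment_cov H t N 0)^2)
    \<longlonglongrightarrow> 2 * 1^2 * 0 + 4 * 1^2 * (4 * K0 H t) / (t/2)^2"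
    (is "?F \<longlonglongrightarrow> _")
    using t by (intro tendsto_add tendsto_mult tendsto_divide tendsto_power tendsto_const ratio decay g0
        weighted_u_increment_cov_sq_asymp H) auto
  moreover have "2 * 1^2 * 0 + 4 * 1^2 * (4 * K0 H t) / (t/2)^2 = 4 * K0 H t / (k1 t)^2"
    by (simp add: k1_def power2_eq_square field_simps)
  ultimately have lim: "?F \<longlonglongrightarrow> 4 * K0 H t / (k1 t)^2" by simp
  have "\<forall>\<^sub>F N in sequentially. ?F N = real N powr (4-4*H) * ((1/(real N - 1))^2 *
      (2 * (real N + 2 * (\<Sum>m=1..N. (real N - real m) * (u_increment_cov H t N m / u_increment_cov H t N 0)^2))))"
    using H t by (intro eventually_sequentiallyI[of 2] scaled_second_moment_expr_split[symmetric]) auto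
  then show ?thesis by (rule Lim_transform_eventually[OF lim])
qed

section \<open>The integral representation of K0\<close>

lemma powr_square_times_one_minus_expand:
  fixes a b H x :: real
  assumes "x \<ge> 0"
  shows "(a * x powr (2*H - 2) + b * x powr (2*H - 1))\<^sup>2 * (1 - x)
    = a^2 * (x powr (4*H-4) - x powr (4*H-3)) + 2*a*b * (x powr (4*H-3) - x powr (4*H-2))
      + b^2 * (x powr (4*H-2) - x powr (4*H-1))"
proof (cases "x = 0")
  case False
  then have x: "x > 0" using assms by simp
  define u where "u = x powr (2*H-2)"
  have succ: "x powr (e + 1) = x * x powr e" for e using x by (simp add: powr_add)
  have q1: "x powr (4*H-4) = u*u" unfolding u_def by (simp add: powr_add[symmetric])
  have v: "x powr (2*H-1) = x*u" unfolding u_def using succ[of "2*H-2"] by (simp add: algebra_simps)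
  have q2: "x powr (4*H-3) = x*(u*u)" using succ[of "4*H-4"] q1 by (simp add: algebra_simps)
  have q3: "x powr (4*H-2) = x*(x*(u*u))" using succ[of "4*H-3"] q2 by (simp add: algebra_simps)
  have q4: "x powr (4*H-1) = x*(x*(x*(u*u)))" using succ[of "4*H-2"] q3 by (simp add: algebra_simps)
  show ?thesis unfolding q1 q2 q3 q4 v u_def[symmetric] by (simp add: power2_eq_square algebra_simps)
qed simp

lemma K0_has_integral:
  fixes H t :: real
  assumes H: "3/4 < H"
  shows "((\<lambda>x. (k1 t * H * (2*H - 1) * x powr (2*H - 2) + k2 H * H * (2*H + 1) * x powr (2*H - 1))\<^sup>2
              * (1 - x)) has_integral K0 H t) {0..1}"
proof -
  define a where "a = k1 t * H * (2*H - 1)"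
  define b where "b = k2 H * H * (2*H + 1)"
  have powr_integral: "((\<lambda>x. x powr e) has_integral (1/(e+1))) {0..1}" if "e > -1" for e :: real
    using has_integral_powr_from_0[OF that, of 1] by simp
  have "((\<lambda>x. a^2 * (x powr (4*H-4) - x powr (4*H-3)) + 2*a*b * (x powr (4*H-3) - x powr (4*H-2))
        + b^2 * (x powr (4*H-2) - x powr (4*H-1))) has_integral
      (a^2 * (1/(4*H-4+1) - 1/(4*H-3+1)) + 2*a*b * (1/(4*H-3+1) - 1/(4*H-2+1)) + b^2 * (1/(4*H-2+1) - 1/(4*H-1+1)))) {0..1}"
    using H by (intro has_integral_add has_integral_diff has_integral_mult_right powr_integral) auto
  moreover have "a^2 * (1/(4*H-4+1) - 1/(4*H-3+1)) + 2*a*b * (1/(4*H-3+1) - 1/(4*H-2+1))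
      + b^2 * (1/(4*H-2+1) - 1/(4*H-1+1)) = K0 H t"
  proof -
    have nz: "4*H-3 \<noteq> 0" "4*H-2 \<noteq> 0" "4*H-1 \<noteq> 0" "H \<noteq> 0" "2*H-1 \<noteq> 0"
      "(4*H-3)*(4*H-2) \<noteq> 0" "(4*H-2)*(4*H-1) \<noteq> 0" "(4*H-1)*(4*H) \<noteq> 0" using H by auto
    have "a^2 * (1/(4*H-4+1) - 1/(4*H-3+1)) = (k1 t)\<^sup>2 * (H\<^sup>2 * (2*H - 1)) / (2*(4*H - 3))"
      "2*a*b * (1/(4*H-3+1) - 1/(4*H-2+1)) = 2 * k1 t * k2 H * (H\<^sup>2 * (2*H + 1)) / (2*(4*H - 1))"
      "b^2 * (1/(4*H-2+1) - 1/(4*H-1+1)) = (k2 H)\<^sup>2 * (H * (2*H + 1)\<^sup>2) / (4*(4*H - 1))"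
      unfolding a_def b_def using nz by (simp_all add: field_simps power2_eq_square)
    then show ?thesis unfolding K0_def by simp
  qed
  ultimately show ?thesis
    using powr_square_times_one_minus_expand[of _ a H b, folded a_def b_def]
    by (subst has_integral_cong[where g="\<lambda>x. a^2 * (x powr (4*H-4) - x powr (4*H-3))
        + 2*a*b * (x powr (4*H-3) - x powr (4*H-2)) + b^2 * (x powr (4*H-2) - x powr (4*H-1))"])
       (auto simp: a_def b_def)
qed

theorem mainTheorem7:
  fixes M :: "'a measure" and X :: "real \<Rightarrow> 'a \<Rightarrow> real" and H t :: real
  assumes "prob_space M"
    and "3/4 < H" and "H < 1" and "t > 1"
    and "centered_gaussian_process M X {0..1} (u_cov H t)"
  shows "((\<lambda>x. (k1 t * H * (2*H - 1) * x powr (2*H - 2) + k2 H * H * (2*H + 1) * x powr (2*H - 1))\<^sup>2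
              * (1 - x)) has_integral K0 H t) {0..1}
     \<and> (\<lambda>N::nat. real N powr (4 - 4*H) * (LINT \<omega>|M. (V_N M X N \<omega>)\<^sup>2))
          \<longlonglongrightarrow> 4 * K0 H t / (k1 t)\<^sup>2"
proof
  show "((\<lambda>x. (k1 t * H * (2*H - 1) * x powr (2*H - 2) + k2 H * H * (2*H + 1) * x powr (2*H - 1))\<^sup>2
      * (1 - x)) has_integral K0 H t) {0..1}"
    using K0_has_integral[OF assms(2)] .
  have "\<forall>\<^sub>F N in sequentially. (LINT \<omega>|M. (V_N M X N \<omega>)\<^sup>2) = (1/(real N - 1))^2 *
      (2 * (real N + 2 * (\<Sum>m=1..N. (real N - real m) * (u_increment_cov H t N m / u_increment_cov H t N 0)^2)))"
    using assms by (intro eventually_sequentiallyI[of 2] second_moment_V_N_u_cov) auto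
  then show "(\<lambda>N::nat. real N powr (4 - 4*H) * (LINT \<omega>|M. (V_N M X N \<omega>)\<^sup>2)) \<longlonglongrightarrow> 4 * K0 H t / (k1 t)\<^sup>2"
    using scaled_second_moment_expr_limit[OF assms(2,4)]
    by (rule_tac Lim_transform_eventually) (auto elim: eventually_mono)
qed

end
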